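(* Let $H\in\mathbb{R}^{n\times d}$ have rank $h$, $\Sigma\in\mathbb{R}^{n\times n}$ symmetric positive definite, $\Gamma_0$ the empirical covariance of an initial ensemble, $C_0=H\Gamma_0H^\top$, $C_{i+1}=\Sigma-\Sigma(C_i+\Sigma)^{-1}\Sigma$, and $\widetilde{\mathcal{M}}_i=\Sigma(C_i+\Sigma)^{-1}$. With $\widetilde{\mathcal{P}},\widetilde{\mathcal{Q}},\widetilde{\mathcal{N}}$ as in the context, for every $i\ge0$ these are complementary spectral projectors of $\widetilde{\mathcal{M}}_i$: each commutes with $\widetilde{\mathcal{M}}_i$ and is idempotent, their pairwise products are zero, and $\widetilde{\mathcal{P}}+\widetilde{\mathcal{Q}}+\widetilde{\mathcal{N}}=I_n$.
   Context: Let $r$ be the number of positive eigenvalues of $C_0\tilde w=\tilde\delta\Sigma\tilde w$. Let $\tilde w_1,\dots,\tilde w_n$ be a basis of $\mathbb{R}^n$ with $\tilde w_k^\top\Sigma\tilde w_l$ equal to $1$ if $k=l$, $0$ otherwise, each a generalized eigenvector of $(C_i,\Sigma)$ for every $i\ge0$, with $\tilde w_1,\dots,\tilde w_r\in\mathsf{Ran}(\Sigma^{-1}H)$ having positive eigenvalues, $\tilde w_{r+1},\dots,\tilde w_h\in\mathsf{Ran}(\Sigma^{-1}H)$ eigenvalue zero, $\tilde w_{h+1},\dots,\tilde w_n\in\mathsf{Ker}(H^\top)$ eigenvalue zero. With $\widetilde W=[\tilde w_1,\dots,\tilde w_n]$ and $\widetilde W_{k:l}$ its columns $k$ through $l$: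 $\widetilde{\mathcal{P}}=\Sigma\widetilde W_{1:r}\widetilde W_{1:r}^\top$, $\widetilde{\mathcal{Q}}=\Sigma\widetilde W_{r+1:h}\widetilde W_{r+1:h}^\top$, $\widetilde{\mathcal{N}}=\Sigma\widetilde W_{h+1:n}\widetilde W_{h+1:n}^\top$. Empirical covariance: $\Gamma_0=\frac1{J-1}\sum_j(v_0^{(j)}-\bar v_0)(v_0^{(j)}-\bar v_0)^\top$. *)

theory Defs
  imports "HOL-Analysis.Analysis"
begin

definition outer :: "real^'m \<Rightarrow> real^'n \<Rightarrow> real^'n^'m" where
  "outer x y = (\<chi> i j. x $ i * y $ j)"

definition ens_mean :: "('j::finite \<Rightarrow> real^'d) \<Rightarrow> real^'d" where
  "ens_mean v = (1 / real CARD('j)) *\<^sub>R (\<Sum>j\<in>UNIV. v j)"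

definition emp_cov :: "('j::finite \<Rightarrow> real^'d) \<Rightarrow> real^'d^'d" where
  "emp_cov v = (1 / (real CARD('j) - 1)) *\<^sub>R
      (\<Sum>j\<in>UNIV. outer (v j - ens_mean v) (v j - ens_mean v))"

fun Cseq :: "real^'n^'n \<Rightarrow> real^'n^'n \<Rightarrow> nat \<Rightarrow> real^'n^'n" where
  "Cseq Sig C0 0 = C0"
| "Cseq Sig C0 (Suc i) = Sig - Sig ** matrix_inv (Cseq Sig C0 i + Sig) ** Sig"

definition Mseq :: "real^'n^'n \<Rightarrow> real^'n^'n \<Rightarrow> nat \<Rightarrow> real^'n^'n" where
  "Mseq Sig C0 i = Sig ** matrix_inv (Cseq Sig C0 i + Sig)"

definition sym_pos_def :: "real^'n^'n \<Rightarrow> bool" where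
  "sym_pos_def S \<longleftrightarrow> transpose S = S \<and> (\<forall>x. x \<noteq> 0 \<longrightarrow> x \<bullet> (S *v x) > 0)"

definition gen_eigvec :: "real^'n^'n \<Rightarrow> real^'n^'n \<Rightarrow> real^'n \<Rightarrow> real \<Rightarrow> bool" where
  "gen_eigvec C S w \<delta> \<longleftrightarrow> w \<noteq> 0 \<and> C *v w = \<delta> *\<^sub>R (S *v w)"

definition proj_block :: "real^'n^'n \<Rightarrow> (nat \<Rightarrow> real^'n) \<Rightarrow> nat set \<Rightarrow> real^'n^'n" where
  "proj_block S w K = S ** (\<Sum>k\<in>K. outer (w k) (w k))"

end

theory Submission imports Defs begin

(* With W = [w_0, ..., w_(n-1)], Sigma-orthonormality W^T Sig W = I already forces Sig W W^T = I.
   Hence every matrix Sig W diag(a) W^T Sig is diagonalised by the w_k, and matrices of the shape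
   W diag(a) W^T multiply diagonally through Sig:
     W diag(a) W^T Sig W diag(b) W^T = W diag(a b) W^T.
   C_0 has this shape with eigenvalues d >= 0, and the recursion for C_i preserves it, sending each
   eigenvalue d to d / (1 + d); so M_i = Sig W diag(1 / (1 + d_i)) W^T. The projectors P, Q, N are
   Sig W diag(1_K) W^T for the three index blocks K, and all claimed identities become identities
   between products of indicator and eigenvalue vectors. *)

lemma outer_mult_vec: "outer a b *v x = (b \<bullet> x) *\<^sub>R a"
  by (simp add: vec_eq_iff outer_def matrix_vector_mult_def inner_vec_def sum_distrib_left mult.commute mult.left_commute)

lemma matrix_add_rdistrib: "(A + B) ** C = A ** C + B ** C"
  by (vector matrix_matrix_mult_def sum.distrib[symmetric] field_simps)

lemma matrix_diff_ldistrib: "A ** (B - C) = A ** B - A ** (C :: 'a::ring_1^_^_)"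
  by (vector matrix_matrix_mult_def sum_subtractf[symmetric] field_simps)

lemma matrix_diff_rdistrib: "(A - B) ** C = A ** C - B ** (C :: 'a::ring_1^_^_)"
  by (vector matrix_matrix_mult_def sum_subtractf[symmetric] field_simps)

lemma sum_matrix_vector_mult: "(\<Sum>k\<in>K. A k) *v x = (\<Sum>k\<in>K. A k *v x)"
  by (induction K rule: infinite_finite_induct) (auto simp: matrix_vector_mult_add_rdistrib)

lemma matrix_inv_eqI:
  fixes A G :: "'a::field^'n^'n"
  assumes AG: "A ** G = mat 1"
  shows "matrix_inv A = G"
proof -
  have GA: "G ** A = mat 1" using AG matrix_left_right_inverse by blast
  have inv: "A ** matrix_inv A = mat 1"
    unfolding matrix_inv_def by (rule someI2[of _ G]) (use AG GA in auto)
  have "matrix_inv A = (G ** A) ** matrix_inv A" using GA by simp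
  also have "\<dots> = G" using inv by (simp flip: matrix_mul_assoc)
  finally show ?thesis .
qed

lemma funpow_div_one_plus_nonneg:
  fixes x :: real
  shows "x \<ge> 0 \<Longrightarrow> ((\<lambda>x. x / (1 + x)) ^^ i) x \<ge> 0"
  by (induction i) auto

definition outer_sum :: "(nat \<Rightarrow> real^'n) \<Rightarrow> (nat \<Rightarrow> real) \<Rightarrow> nat set \<Rightarrow> real^'n^'n" where
  "outer_sum w a K = (\<Sum>k\<in>K. a k *\<^sub>R outer (w k) (w k))"

lemma outer_sum_mult_vec: "outer_sum w a K *v x = (\<Sum>k\<in>K. (a k * (w k \<bullet> x)) *\<^sub>R w k)"
  unfolding outer_sum_def by (simp add: sum_matrix_vector_mult outer_mult_vec flip: scaleR_matrix_vector_assoc)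

lemma outer_sum_add: "outer_sum w a K + outer_sum w b K = outer_sum w (\<lambda>k. a k + b k) K"
  unfolding outer_sum_def by (simp add: sum.distrib scaleR_add_left)

lemma outer_sum_diff: "outer_sum w a K - outer_sum w b K = outer_sum w (\<lambda>k. a k - b k) K"
  unfolding outer_sum_def by (simp add: sum_subtractf scaleR_diff_left)

lemma outer_sum_cong: "(\<And>k. k \<in> K \<Longrightarrow> a k = b k) \<Longrightarrow> outer_sum w a K = outer_sum w b K"
  unfolding outer_sum_def by (rule sum.cong) auto

lemma proj_block_eq_outer_sum: "proj_block S w K = S ** outer_sum w (\<lambda>_. 1) K"
  unfolding proj_block_def outer_sum_def by simp

lemma proj_block_empty: "proj_block S w {} = 0"
  by (simp add: proj_block_def)

lemma proj_block_Un:
  assumes "finite K" "finite L" "K \<inter> L = {}"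
  shows "proj_block S w (K \<union> L) = proj_block S w K + proj_block S w L"
  unfolding proj_block_def using assms by (simp add: sum.union_disjoint matrix_add_ldistrib)

locale sigma_orthonormal =
  fixes S :: "real^'n^'n" and w :: "nat \<Rightarrow> real^'n"
  assumes orth: "\<forall>k<CARD('n). \<forall>l<CARD('n). w k \<bullet> (S *v w l) = (if k = l then 1 else 0)"
begin

lemma outer_sum_mult_S_w:
  assumes K: "K \<subseteq> {..<CARD('n)}" and l: "l < CARD('n)"
  shows "outer_sum w a K *v (S *v w l) = (if l \<in> K then a l *\<^sub>R w l else 0)"
proof -
  have "outer_sum w a K *v (S *v w l) = (\<Sum>k\<in>K. if k = l then a l *\<^sub>R w l else 0)"
    unfolding outer_sum_mult_vec by (rule sum.cong) (use orth K l in auto)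
  also have "\<dots> = (if l \<in> K then a l *\<^sub>R w l else 0)"
    using finite_subset[OF K] by (simp add: sum.delta')
  finally show ?thesis .
qed

lemma outer_sum_S_outer_sum:
  assumes K: "K \<subseteq> {..<CARD('n)}" and L: "L \<subseteq> {..<CARD('n)}"
  shows "outer_sum w a K ** S ** outer_sum w b L = outer_sum w (\<lambda>k. a k * b k) (K \<inter> L)"
proof (rule matrix_eq[THEN iffD2], intro allI)
  fix x
  have "(outer_sum w a K ** S ** outer_sum w b L) *v x
      = (\<Sum>l\<in>L. (b l * (w l \<bullet> x)) *\<^sub>R (outer_sum w a K *v (S *v w l)))"
    by (simp add: outer_sum_mult_vec vec.sum matrix_vector_mult_scaleR flip: matrix_vector_mul_assoc)
  also have "\<dots> = (\<Sum>l\<in>L. if l \<in> K then (a l * b l * (w l \<bullet> x)) *\<^sub>R w l else 0)"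
    by (rule sum.cong) (use L in \<open>auto simp: outer_sum_mult_S_w[OF K]\<close>)
  also have "\<dots> = outer_sum w (\<lambda>k. a k * b k) (K \<inter> L) *v x"
    using finite_subset[OF L] by (simp add: outer_sum_mult_vec Int_commute[of K L] sum.inter_restrict)
  finally show "(outer_sum w a K ** S ** outer_sum w b L) *v x = outer_sum w (\<lambda>k. a k * b k) (K \<inter> L) *v x" .
qed

lemma inj_on_w: "inj_on w {..<CARD('n)}"
proof (rule inj_onI)
  fix k l assume "k \<in> {..<CARD('n)}" "l \<in> {..<CARD('n)}" "w k = w l"
  then show "k = l" using orth by (metis lessThan_iff zero_neq_one)
qed

lemma independent_w: "independent (w ` {..<CARD('n)})"
proof (rule independent_if_scalars_zero)
  fix c v assume sum0: "(\<Sum>u\<in>w ` {..<CARD('n)}. c u *\<^sub>R u) = 0" and "v \<in> w ` {..<CARD('n)}"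
  then obtain l where l: "l < CARD('n)" "v = w l" by auto
  have "0 = (\<Sum>k<CARD('n). c (w k) *\<^sub>R w k) \<bullet> (S *v w l)"
    using sum0 by (simp add: sum.reindex[OF inj_on_w])
  also have "\<dots> = (\<Sum>k<CARD('n). if k = l then c (w l) else 0)"
    unfolding inner_sum_left by (rule sum.cong) (use orth l in auto)
  also have "\<dots> = c v" using l by simp
  finally show "c v = 0" by simp
qed simp

lemma span_w: "span (w ` {..<CARD('n)}) = UNIV"
proof -
  have "card (w ` {..<CARD('n)}) = DIM(real^'n)"
    by (simp add: card_image[OF inj_on_w])
  then show ?thesis
    using card_ge_dim_independent[OF subset_UNIV independent_w] by auto
qed

lemma matrix_eq_on_w:
  fixes A B :: "real^'n^'n"
  assumes "\<And>k. k < CARD('n) \<Longrightarrow> A *v w k = B *v w k"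
  shows "A = B"
proof (rule matrix_eq[THEN iffD2], intro allI)
  fix x :: "real^'n"
  show "A *v x = B *v x"
    by (rule linear_eq_on[where B = "w ` {..<CARD('n)}"]) (use assms span_w in auto)
qed

lemma outer_sum_one_S: "outer_sum w (\<lambda>_. 1) {..<CARD('n)} ** S = mat 1"
  by (rule matrix_eq_on_w) (simp add: outer_sum_mult_S_w flip: matrix_vector_mul_assoc)

lemma S_outer_sum_one: "S ** outer_sum w (\<lambda>_. 1) {..<CARD('n)} = mat 1"
  using outer_sum_one_S matrix_left_right_inverse by blast

lemma S_outer_sum_S_eqI:
  assumes "\<And>k. k < CARD('n) \<Longrightarrow> C *v w k = d k *\<^sub>R (S *v w k)"
  shows "C = S ** outer_sum w d {..<CARD('n)} ** S"
  by (rule matrix_eq_on_w)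
    (simp add: assms outer_sum_mult_S_w matrix_vector_mult_scaleR flip: matrix_vector_mul_assoc)

lemma nonneg_eigen_decomposition:
  assumes "\<And>k. k < CARD('n) \<Longrightarrow> \<exists>\<delta>\<ge>0. gen_eigvec C S (w k) \<delta>"
  obtains d where "\<And>k. k < CARD('n) \<Longrightarrow> d k \<ge> 0" and "C = S ** outer_sum w d {..<CARD('n)} ** S"
proof -
  from assms have "\<forall>k. \<exists>\<delta>. k < CARD('n) \<longrightarrow> \<delta> \<ge> 0 \<and> C *v w k = \<delta> *\<^sub>R (S *v w k)"
    unfolding gen_eigvec_def by blast
  then obtain d where "\<And>k. k < CARD('n) \<Longrightarrow> d k \<ge> 0 \<and> C *v w k = d k *\<^sub>R (S *v w k)"
    using choice by meson
  with that show ?thesis using S_outer_sum_S_eqI by blast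
qed

lemma S_outer_sum_mult:
  assumes "K \<subseteq> {..<CARD('n)}" "L \<subseteq> {..<CARD('n)}"
  shows "(S ** outer_sum w a K) ** (S ** outer_sum w b L) = S ** outer_sum w (\<lambda>k. a k * b k) (K \<inter> L)"
  using outer_sum_S_outer_sum[OF assms, of a b] by (simp flip: matrix_mul_assoc)

lemma matrix_inv_S_outer_sum_S:
  assumes "\<And>k. k < CARD('n) \<Longrightarrow> a k \<noteq> 0"
  shows "matrix_inv (S ** outer_sum w a {..<CARD('n)} ** S) = outer_sum w (\<lambda>k. 1 / a k) {..<CARD('n)}"
proof (rule matrix_inv_eqI)
  have "S ** outer_sum w a {..<CARD('n)} ** S ** outer_sum w (\<lambda>k. 1 / a k) {..<CARD('n)}
      = S ** outer_sum w (\<lambda>k. a k * (1 / a k)) {..<CARD('n)}"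
    using outer_sum_S_outer_sum[of "{..<CARD('n)}" "{..<CARD('n)}"] by (simp flip: matrix_mul_assoc)
  also have "\<dots> = S ** outer_sum w (\<lambda>_. 1) {..<CARD('n)}"
    using assms by (intro arg_cong[where f = "(**) S"] outer_sum_cong) auto
  finally show "S ** outer_sum w a {..<CARD('n)} ** S ** outer_sum w (\<lambda>k. 1 / a k) {..<CARD('n)} = mat 1"
    using S_outer_sum_one by simp
qed

lemma S_outer_sum_S_add:
  "S ** outer_sum w a K ** S + S ** outer_sum w b K ** S = S ** outer_sum w (\<lambda>k. a k + b k) K ** S"
  by (simp add: outer_sum_add flip: matrix_add_ldistrib matrix_add_rdistrib)

lemma S_outer_sum_S_diff:
  "S ** outer_sum w a K ** S - S ** outer_sum w b K ** S = S ** outer_sum w (\<lambda>k. a k - b k) K ** S"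
  by (simp add: outer_sum_diff flip: matrix_diff_ldistrib matrix_diff_rdistrib)

lemma S_eq_S_outer_sum_S: "S = S ** outer_sum w (\<lambda>_. 1) {..<CARD('n)} ** S"
  by (simp add: S_outer_sum_one)

lemma matrix_inv_S_outer_sum_S_plus_S:
  assumes "\<And>k. k < CARD('n) \<Longrightarrow> a k \<ge> 0"
  shows "matrix_inv (S ** outer_sum w a {..<CARD('n)} ** S + S)
       = outer_sum w (\<lambda>k. 1 / (a k + 1)) {..<CARD('n)}"
proof -
  have "S ** outer_sum w a {..<CARD('n)} ** S + S = S ** outer_sum w (\<lambda>k. a k + 1) {..<CARD('n)} ** S"
    by (subst (3) S_eq_S_outer_sum_S) (rule S_outer_sum_S_add)
  then show ?thesis
    using assms by (simp add: matrix_inv_S_outer_sum_S add_nonneg_eq_0_iff)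
qed

lemma Cseq_eq_S_outer_sum_S:
  assumes C0: "C0 = S ** outer_sum w d {..<CARD('n)} ** S"
    and d: "\<And>k. k < CARD('n) \<Longrightarrow> d k \<ge> 0"
  shows "Cseq S C0 i = S ** outer_sum w (\<lambda>k. ((\<lambda>x. x / (1 + x)) ^^ i) (d k)) {..<CARD('n)} ** S"
proof (induction i)
  case 0
  then show ?case using C0 by simp
next
  case (Suc i)
  define e where "e k = ((\<lambda>x. x / (1 + x)) ^^ i) (d k)" for k
  have e: "e k \<ge> 0" if "k < CARD('n)" for k
    unfolding e_def using d[OF that] by (rule funpow_div_one_plus_nonneg)
  have "Cseq S C0 (Suc i)
      = S ** outer_sum w (\<lambda>_. 1) {..<CARD('n)} ** S - S ** outer_sum w (\<lambda>k. 1 / (e k + 1)) {..<CARD('n)} ** S"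
    using Suc.IH matrix_inv_S_outer_sum_S_plus_S[OF e] by (simp add: e_def S_outer_sum_one)
  also have "\<dots> = S ** outer_sum w (\<lambda>k. 1 - 1 / (e k + 1)) {..<CARD('n)} ** S"
    by (rule S_outer_sum_S_diff)
  also have "\<dots> = S ** outer_sum w (\<lambda>k. ((\<lambda>x. x / (1 + x)) ^^ Suc i) (d k)) {..<CARD('n)} ** S"
  proof (intro arg_cong2[where f = "(**)"] arg_cong[where f = "(**) S"] outer_sum_cong refl)
    fix k assume "k \<in> {..<CARD('n)}"
    then have "e k + 1 \<noteq> 0" using e by (simp add: add_nonneg_eq_0_iff)
    then show "1 - 1 / (e k + 1) = ((\<lambda>x. x / (1 + x)) ^^ Suc i) (d k)"
      by (simp add: e_def field_simps)
  qed
  finally show ?case .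
qed

lemma Mseq_eq_S_outer_sum:
  assumes "C0 = S ** outer_sum w d {..<CARD('n)} ** S"
    and d: "\<And>k. k < CARD('n) \<Longrightarrow> d k \<ge> 0"
  shows "Mseq S C0 i = S ** outer_sum w (\<lambda>k. 1 / (((\<lambda>x. x / (1 + x)) ^^ i) (d k) + 1)) {..<CARD('n)}"
proof -
  have "Cseq S C0 i = S ** outer_sum w (\<lambda>k. ((\<lambda>x. x / (1 + x)) ^^ i) (d k)) {..<CARD('n)} ** S"
    by (rule Cseq_eq_S_outer_sum_S[OF assms])
  then show ?thesis
    unfolding Mseq_def by (simp add: matrix_inv_S_outer_sum_S_plus_S d funpow_div_one_plus_nonneg)
qed

lemma proj_block_mult:
  assumes "K \<subseteq> {..<CARD('n)}" "L \<subseteq> {..<CARD('n)}"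
  shows "proj_block S w K ** proj_block S w L = proj_block S w (K \<inter> L)"
  using S_outer_sum_mult[OF assms] by (simp add: proj_block_eq_outer_sum)

lemma proj_block_commute:
  assumes K: "K \<subseteq> {..<CARD('n)}"
  shows "proj_block S w K ** (S ** outer_sum w g {..<CARD('n)})
       = (S ** outer_sum w g {..<CARD('n)}) ** proj_block S w K"
  using S_outer_sum_mult[OF K subset_refl] S_outer_sum_mult[OF subset_refl K]
  by (simp add: proj_block_eq_outer_sum Int_commute)

lemma proj_block_all: "proj_block S w {..<CARD('n)} = mat 1"
  by (simp add: proj_block_eq_outer_sum S_outer_sum_one)

lemma proj_block_three_blocks:
  assumes "r \<le> h" "h \<le> CARD('n)"
  shows "proj_block S w {0..<r} + proj_block S w {r..<h} + proj_block S w {h..<CARD('n)} = mat 1"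
proof -
  have "{0..<r} \<union> {r..<h} \<union> {h..<CARD('n)} = {..<CARD('n)}"
    using assms by auto
  then have "mat 1 = proj_block S w ({0..<r} \<union> {r..<h} \<union> {h..<CARD('n)})"
    by (simp only: proj_block_all)
  also have "\<dots> = proj_block S w ({0..<r} \<union> {r..<h}) + proj_block S w {h..<CARD('n)}"
    by (rule proj_block_Un) (use assms in auto)
  also have "proj_block S w ({0..<r} \<union> {r..<h}) = proj_block S w {0..<r} + proj_block S w {r..<h}"
    by (rule proj_block_Un) auto
  finally show ?thesis by simp
qed

end

theorem proposition4p4:
  fixes H :: "real^'d^'n"
    and Sig :: "real^'n^'n"
    and v0 :: "'j::finite \<Rightarrow> real^'d"
    and w :: "nat \<Rightarrow> real^'n"
    and r h :: nat
  defines "C0 \<equiv> H ** emp_cov v0 ** transpose H"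
  assumes Sig_spd: "sym_pos_def Sig"
    and h_def: "h = rank H"
    and r_le: "r \<le> h"
    and orth: "\<forall>k<CARD('n). \<forall>l<CARD('n). w k \<bullet> (Sig *v w l) = (if k = l then 1 else 0)"
    and eig_all: "\<forall>i. \<forall>k<CARD('n). \<exists>\<delta>. gen_eigvec (Cseq Sig C0 i) Sig (w k) \<delta>"
    and pos: "\<forall>k<r. w k \<in> range (\<lambda>x. (matrix_inv Sig ** H) *v x)
                   \<and> (\<exists>\<delta>>0. gen_eigvec C0 Sig (w k) \<delta>)"
    and zero_ran: "\<forall>k. r \<le> k \<and> k < h \<longrightarrow> w k \<in> range (\<lambda>x. (matrix_inv Sig ** H) *v x)
                   \<and> gen_eigvec C0 Sig (w k) 0"
    and zero_ker: "\<forall>k. h \<le> k \<and> k < CARD('n) \<longrightarrow> transpose H *v w k = 0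
                   \<and> gen_eigvec C0 Sig (w k) 0"
  shows "\<forall>i. let P = proj_block Sig w {0..<r};
                 Q = proj_block Sig w {r..<h};
                 N = proj_block Sig w {h..<CARD('n)};
                 M = Mseq Sig C0 i
             in P ** M = M ** P \<and> Q ** M = M ** Q \<and> N ** M = M ** N
              \<and> P ** P = P \<and> Q ** Q = Q \<and> N ** N = N
              \<and> P ** Q = 0 \<and> Q ** P = 0 \<and> P ** N = 0 \<and> N ** P = 0
              \<and> Q ** N = 0 \<and> N ** Q = 0
              \<and> P + Q + N = mat 1"
proof -
  interpret sigma_orthonormal Sig w using orth by unfold_locales
  have h_le: "h \<le> CARD('n)" using rank_bound[of H] h_def by simp
  have eig: "\<exists>\<delta>\<ge>0. gen_eigvec C0 Sig (w k) \<delta>" if "k < CARD('n)" for k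
  proof (cases "k < r")
    case True
    then show ?thesis using pos by (meson less_imp_le)
  next
    case False
    then show ?thesis using that zero_ran zero_ker by (cases "k < h") auto
  qed
  obtain d where d: "\<And>k. k < CARD('n) \<Longrightarrow> d k \<ge> 0"
    and C0: "C0 = Sig ** outer_sum w d {..<CARD('n)} ** Sig"
    using nonneg_eigen_decomposition[OF eig] by blast
  have blocks: "{0..<r} \<subseteq> {..<CARD('n)}" "{r..<h} \<subseteq> {..<CARD('n)}" "{h..<CARD('n)} \<subseteq> {..<CARD('n)}"
    using r_le h_le by auto
  show ?thesis using blocks r_le h_le
    by (simp add: Let_def Mseq_eq_S_outer_sum[OF C0 d] proj_block_commute proj_block_mult
        proj_block_empty proj_block_three_blocks)
qed

end
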